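(* Let $S \subseteq \mathbb{R}^n$ be nonempty, closed and convex, let $F = (F_1,\dots,F_m)^\top \colon S \to \mathbb{R}^m$ be continuous with each $F_i$ strictly convex, let $\ell > 0$, and let \[ u_\ell(x) := \max_{y \in S} \min_{i = 1,\dots,m} \left\{F_i(x) - F_i(y) - \frac{\ell}{2}\|x - y\|^2\right\}, \quad x\in S. \] If $x \in S$ is a stationary point of $\min_{x \in S} u_\ell(x)$, i.e., $u_\ell'(x; z - x) \ge 0$ for all $z \in S$, then $x$ is Pareto optimal for $\min_{x\in S} F(x)$.
   Context: $u_\ell'(x;d) := \lim_{t\searrow 0}(u_\ell(x+td)-u_\ell(x))/t$ (directional derivative). A point $x^\ast \in S$ is Pareto optimal for $\min_{x\in S} F(x)$ if there is no $x \in S$ with $F_i(x) \le F_i(x^\ast)$ for all $i$ and $F(x) \neq F(x^\ast)$. *)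

theory Defs
  imports "HOL-Analysis.Analysis"
begin

definition strictly_convex_on :: "'a::real_vector set \<Rightarrow> ('a \<Rightarrow> real) \<Rightarrow> bool" where
  "strictly_convex_on S f \<longleftrightarrow>
     (\<forall>x\<in>S. \<forall>y\<in>S. \<forall>t::real. x \<noteq> y \<and> 0 < t \<and> t < 1 \<longrightarrow>
        f ((1 - t) *\<^sub>R x + t *\<^sub>R y) < (1 - t) * f x + t * f y)"

text \<open>Merit function u_l(x) = max over y in S of min over i < m of
  F_i(x) - F_i(y) - l/2 |x - y|^2 (the max is attained, so Sup equals it).\<close>
definition u_merit :: "real \<Rightarrow> nat \<Rightarrow> (nat \<Rightarrow> 'a::euclidean_space \<Rightarrow> real) \<Rightarrow> 'a set \<Rightarrow> 'a \<Rightarrow> real" where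
  "u_merit l m F S x =
     (SUP y\<in>S. Min ((\<lambda>i. F i x - F i y - l / 2 * (norm (x - y))\<^sup>2) ` {..<m}))"

definition dir_deriv :: "('a::real_normed_vector \<Rightarrow> real) \<Rightarrow> 'a \<Rightarrow> 'a \<Rightarrow> real \<Rightarrow> bool" where
  "dir_deriv u x d L \<longleftrightarrow> ((\<lambda>t. (u (x + t *\<^sub>R d) - u x) / t) \<longlongrightarrow> L) (at_right 0)"

definition pareto_optimal :: "nat \<Rightarrow> (nat \<Rightarrow> 'a \<Rightarrow> real) \<Rightarrow> 'a set \<Rightarrow> 'a \<Rightarrow> bool" where
  "pareto_optimal m F S xs \<longleftrightarrow> xs \<in> S \<and>
     \<not> (\<exists>x\<in>S. (\<forall>i<m. F i x \<le> F i xs) \<and> (\<exists>i<m. F i x \<noteq> F i xs))"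

end

theory Submission imports Defs begin

(* For fixed x the function y \<mapsto> min_i {F_i(x) - F_i(y) - l/2 |x - y|^2} is l-strongly concave,
   so it attains its maximum u_l(x) at some z \<in> S and falls off quadratically away from z.
   If z \<noteq> x, strict convexity at the midpoint of x and z yields a margin d > 0 by which every
   F_i is below its chord, and this makes u_l decrease at rate at least 2d from x towards z,
   contradicting stationarity. Hence z = x, and the quadratic fall-off at x rules out any point
   of S improving all F_i strictly; by strict convexity the midpoint of x and a point dominating
   x would be such a point. *)

definition merit_gap :: "real \<Rightarrow> nat \<Rightarrow> (nat \<Rightarrow> 'a::real_normed_vector \<Rightarrow> real) \<Rightarrow> 'a \<Rightarrow> 'a \<Rightarrow> real" where
  "merit_gap l m F x y = Min ((\<lambda>i. F i x - F i y - l / 2 * (norm (x - y))\<^sup>2) ` {..<m})"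

definition strongly_concave_on :: "real \<Rightarrow> 'a::real_normed_vector set \<Rightarrow> ('a \<Rightarrow> real) \<Rightarrow> bool" where
  "strongly_concave_on c S g \<longleftrightarrow>
     (\<forall>a\<in>S. \<forall>b\<in>S. \<forall>s. 0 \<le> s \<and> s \<le> 1 \<longrightarrow>
        (1 - s) * g a + s * g b + c / 2 * s * (1 - s) * (norm (a - b))\<^sup>2 \<le> g ((1 - s) *\<^sub>R a + s *\<^sub>R b))"

lemma continuous_on_Min:
  fixes g :: "'i \<Rightarrow> 'a::topological_space \<Rightarrow> 'b::linorder_topology"
  assumes "finite I" "I \<noteq> {}" "\<And>i. i \<in> I \<Longrightarrow> continuous_on S (g i)"
  shows "continuous_on S (\<lambda>y. Min ((\<lambda>i. g i y) ` I))"
  using assms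
proof (induction I rule: finite_ne_induct)
  case (insert i I)
  then have "(\<lambda>y. Min ((\<lambda>i. g i y) ` insert i I)) = (\<lambda>y. min (g i y) (Min ((\<lambda>i. g i y) ` I)))"
    by (auto simp: Min_insert)
  then show ?case
    using insert by (auto intro!: continuous_on_min)
qed simp

lemma power2_norm_convex_combination:
  fixes u v :: "'a::real_inner"
  shows "(norm ((1 - s) *\<^sub>R u + s *\<^sub>R v))\<^sup>2
    = (1 - s) * (norm u)\<^sup>2 + s * (norm v)\<^sup>2 - s * (1 - s) * (norm (u - v))\<^sup>2"
  unfolding power2_norm_eq_inner
  by (simp add: inner_add_left inner_add_right inner_diff_left inner_diff_right inner_commute algebra_simps)

lemma power2_norm_diff_le_shifted:
  fixes x y z :: "'a::real_inner"
  shows "(norm (x - y))\<^sup>2 \<le> (norm (x + t *\<^sub>R (z - x) - y))\<^sup>2 + (norm (y - z))\<^sup>2 + 2 * t * (norm (z - x))\<^sup>2"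
proof -
  have "(norm (x + t *\<^sub>R (z - x) - y))\<^sup>2 + (norm (y - z))\<^sup>2 + 2 * t * (norm (z - x))\<^sup>2
      = (norm (x - y))\<^sup>2 + (norm (z - y + t *\<^sub>R (z - x)))\<^sup>2"
    unfolding power2_norm_eq_inner
    by (simp add: inner_add_left inner_add_right inner_diff_left inner_diff_right inner_commute
        algebra_simps)
  then show ?thesis by simp
qed

lemma strictly_convex_on_imp_convex_on:
  assumes "convex S" "strictly_convex_on S f"
  shows "convex_on S f"
proof (rule convex_onI[OF _ assms(1)])
  fix t :: real and x y assume "0 < t" "t < 1" "x \<in> S" "y \<in> S"
  then show "f ((1 - t) *\<^sub>R x + t *\<^sub>R y) \<le> (1 - t) * f x + t * f y"
    using assms(2) unfolding strictly_convex_on_def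
    by (cases "x = y") (auto simp: algebra_simps simp flip: scaleR_left_distrib intro: less_imp_le)
qed

lemma strictly_convex_on_midpoint_less:
  assumes "strictly_convex_on S f" "a \<in> S" "b \<in> S" "a \<noteq> b"
  shows "f (midpoint a b) < (f a + f b) / 2"
proof -
  have "f ((1 - t) *\<^sub>R a + t *\<^sub>R b) < (1 - t) * f a + t * f b" if "0 < t" "t < 1" for t :: real
    using assms that unfolding strictly_convex_on_def by blast
  from this[of "1/2"] show ?thesis
    by (simp add: midpoint_def scaleR_right_distrib add_divide_distrib)
qed

lemma midpoint_in_convex:
  assumes "convex S" "a \<in> S" "b \<in> S"
  shows "midpoint a b \<in> S"
  using closed_segment_subset[OF assms(2,3,1)] midpoint_in_closed_segment by blast

lemma convex_on_midpoint_descent: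
  assumes "convex_on S f" "a \<in> S" "b \<in> S" "0 \<le> t" "t \<le> 1/2"
  shows "f (a + t *\<^sub>R (b - a)) \<le> f a + t * (f b - f a) - 2 * t * ((f a + f b) / 2 - f (midpoint a b))"
proof -
  have "midpoint a b \<in> S"
    using assms(1-3) by (auto simp: convex_on_def intro: midpoint_in_convex)
  moreover have "a + t *\<^sub>R (b - a) = (1 - 2 * t) *\<^sub>R a + (2 * t) *\<^sub>R midpoint a b"
    by (simp add: midpoint_def algebra_simps flip: scaleR_2)
  ultimately have "f (a + t *\<^sub>R (b - a)) \<le> (1 - 2 * t) * f a + (2 * t) * f (midpoint a b)"
    using convex_onD[OF assms(1), of "2 * t" a "midpoint a b"] assms(2,4,5) by simp
  then show ?thesis by (simp add: field_simps)
qed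

lemma u_merit_eq_SUP_merit_gap: "u_merit l m F S x = (SUP y\<in>S. merit_gap l m F x y)"
  by (simp add: u_merit_def merit_gap_def)

lemma merit_gap_le: "j < m \<Longrightarrow> merit_gap l m F x y \<le> F j x - F j y - l / 2 * (norm (x - y))\<^sup>2"
  unfolding merit_gap_def by (rule Min_le) auto

lemma merit_gap_attained:
  assumes "0 < m"
  obtains j where "j < m" "merit_gap l m F x y = F j x - F j y - l / 2 * (norm (x - y))\<^sup>2"
proof -
  have "merit_gap l m F x y \<in> (\<lambda>i. F i x - F i y - l / 2 * (norm (x - y))\<^sup>2) ` {..<m}"
    unfolding merit_gap_def using assms by (intro Min_in) auto
  then show thesis using that by auto
qed

lemma merit_gap_greatest:
  assumes "0 < m" "\<And>i. i < m \<Longrightarrow> c \<le> F i x - F i y - l / 2 * (norm (x - y))\<^sup>2"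
  shows "c \<le> merit_gap l m F x y"
  unfolding merit_gap_def using assms by (subst Min_ge_iff) auto

lemma merit_gap_self: "0 < m \<Longrightarrow> merit_gap l m F x x = 0"
  using merit_gap_le[of 0 m l F x x] merit_gap_greatest[of m 0 F x x l] by simp

lemma continuous_on_merit_gap:
  assumes "0 < m" "\<And>i. i < m \<Longrightarrow> continuous_on S (F i)"
  shows "continuous_on S (merit_gap l m F x)"
  unfolding merit_gap_def using assms
  by (intro continuous_on_Min) (auto intro!: continuous_intros)

lemma strongly_concave_on_merit_gap:
  fixes F :: "nat \<Rightarrow> 'a::real_inner \<Rightarrow> real"
  assumes "0 < m" "\<And>i. i < m \<Longrightarrow> convex_on S (F i)"
  shows "strongly_concave_on l S (merit_gap l m F x)"
  unfolding strongly_concave_on_def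
proof (intro ballI allI impI)
  fix a b and s :: real
  assume ab: "a \<in> S" "b \<in> S" and s: "0 \<le> s \<and> s \<le> 1"
  define p where "p = (1 - s) *\<^sub>R a + s *\<^sub>R b"
  have "x - p = (1 - s) *\<^sub>R (x - a) + s *\<^sub>R (x - b)"
    by (simp add: p_def algebra_simps)
  then have "l / 2 * (norm (x - p))\<^sup>2
      = l / 2 * ((1 - s) * (norm (x - a))\<^sup>2 + s * (norm (x - b))\<^sup>2 - s * (1 - s) * (norm (a - b))\<^sup>2)"
    using power2_norm_convex_combination[of s "x - a" "x - b"] by (simp add: norm_minus_commute)
  show "(1 - s) * merit_gap l m F x a + s * merit_gap l m F x b + l / 2 * s * (1 - s) * (norm (a - b))\<^sup>2
      \<le> merit_gap l m F x ((1 - s) *\<^sub>R a + s *\<^sub>R b)"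
    unfolding p_def[symmetric]
  proof (rule merit_gap_greatest[OF assms(1)])
    fix i assume i: "i < m"
    have "(1 - s) * merit_gap l m F x a \<le> (1 - s) * (F i x - F i a - l / 2 * (norm (x - a))\<^sup>2)"
      using merit_gap_le[OF i] s by (intro mult_left_mono) auto
    moreover have "s * merit_gap l m F x b \<le> s * (F i x - F i b - l / 2 * (norm (x - b))\<^sup>2)"
      using merit_gap_le[OF i] s by (intro mult_left_mono) auto
    moreover have "F i p \<le> (1 - s) * F i a + s * F i b"
      unfolding p_def using convex_onD[OF assms(2)[OF i]] ab s by blast
    ultimately show "(1 - s) * merit_gap l m F x a + s * merit_gap l m F x b
        + l / 2 * s * (1 - s) * (norm (a - b))\<^sup>2 \<le> F i x - F i p - l / 2 * (norm (x - p))\<^sup>2"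
      using \<open>l / 2 * (norm (x - p))\<^sup>2 = _\<close> by (simp add: algebra_simps diff_divide_distrib add_divide_distrib)
  qed
qed

lemma strongly_concave_on_quadratic_growth:
  assumes "convex S" "strongly_concave_on c S g" "z \<in> S" "\<And>y. y \<in> S \<Longrightarrow> g y \<le> g z" "y \<in> S"
  shows "g y \<le> g z - c / 2 * (norm (y - z))\<^sup>2"
proof -
  define N where "N = (norm (y - z))\<^sup>2"
  have "g y - g z + c / 2 * (1 - s) * N \<le> 0" if s: "0 < s" "s < 1" for s
  proof -
    have "(1 - s) * g z + s * g y + c / 2 * s * (1 - s) * (norm (z - y))\<^sup>2 \<le> g ((1 - s) *\<^sub>R z + s *\<^sub>R y)"
      using assms(2,3,5) s unfolding strongly_concave_on_def by simp
    then have "(1 - s) * g z + s * g y + c / 2 * s * (1 - s) * N \<le> g ((1 - s) *\<^sub>R z + s *\<^sub>R y)"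
      unfolding N_def by (simp add: norm_minus_commute)
    also have "\<dots> \<le> g z"
      using assms(4) convexD_alt[OF assms(1,3,5)] s by simp
    finally have "s * (g y - g z + c / 2 * (1 - s) * N) \<le> 0"
      by (simp add: algebra_simps)
    then show ?thesis using s by (simp add: mult_le_0_iff)
  qed
  then have "\<forall>\<^sub>F s in at_right 0. g y - g z + c / 2 * (1 - s) * N \<le> 0"
    unfolding eventually_at_right_field by (intro exI[of _ 1]) auto
  moreover have "((\<lambda>s. g y - g z + c / 2 * (1 - s) * N) \<longlongrightarrow> g y - g z + c / 2 * N) (at_right 0)"
    by (auto intro!: tendsto_eq_intros)
  ultimately have "g y - g z + c / 2 * N \<le> 0"
    by (intro tendsto_upperbound) auto
  then show ?thesis unfolding N_def by simp
qed

lemma strongly_concave_on_decay: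
  assumes "convex S" "strongly_concave_on c S g" "x \<in> S" "y \<in> S"
    and bound: "\<And>w. w \<in> S \<Longrightarrow> norm (w - x) \<le> 1 \<Longrightarrow> g w \<le> M"
    and far: "1 < norm (y - x)"
  shows "g y - g x \<le> norm (y - x) * (M - g x - c / 2 * (norm (y - x) - 1))"
proof -
  define r where "r = norm (y - x)"
  define s where "s = 1 / r"
  have r: "1 < r" using far unfolding r_def .
  have s: "0 \<le> s" "s \<le> 1" using r unfolding s_def by auto
  have "y \<noteq> x" using far by auto
  define w where "w = (1 - s) *\<^sub>R x + s *\<^sub>R y"
  have "w \<in> S" unfolding w_def using convexD_alt[OF assms(1,3,4) s] .
  moreover have "norm (w - x) = 1"
  proof -
    have "w - x = s *\<^sub>R (y - x)" by (simp add: w_def algebra_simps)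
    then show ?thesis using r by (simp add: s_def r_def[symmetric])
  qed
  ultimately have "g w \<le> M" using bound by simp
  moreover have "(1 - s) * g x + s * g y + c / 2 * s * (1 - s) * (norm (x - y))\<^sup>2 \<le> g w"
    using assms(2,3,4) s unfolding strongly_concave_on_def w_def by simp
  moreover have "c / 2 * s * (1 - s) * (norm (x - y))\<^sup>2 = c / 2 * (r - 1)"
  proof -
    have "s * (1 - s) * (norm (x - y))\<^sup>2 = r - 1"
      using r \<open>y \<noteq> x\<close> by (simp add: s_def r_def norm_minus_commute[of x y] power2_eq_square field_simps)
    then show ?thesis by (simp add: mult.assoc)
  qed
  moreover have "(1 - s) * g x = g x - s * g x" "s * (g y - g x) = s * g y - s * g x"
    by (simp_all add: algebra_simps)
  ultimately have "s * (g y - g x) \<le> M - g x - c / 2 * (r - 1)"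
    by linarith
  then have "r * (s * (g y - g x)) \<le> r * (M - g x - c / 2 * (r - 1))"
    using r by (intro mult_left_mono) auto
  then show ?thesis using r by (simp add: s_def r_def[symmetric])
qed

lemma strongly_concave_on_attains_max:
  fixes S :: "'a::euclidean_space set"
  assumes "closed S" "convex S" "S \<noteq> {}" "continuous_on S g" "strongly_concave_on c S g" "0 < c"
  obtains z where "z \<in> S" "\<And>y. y \<in> S \<Longrightarrow> g y \<le> g z"
proof -
  have attains_on_ball: "\<exists>w\<in>S \<inter> cball x r. \<forall>y\<in>S \<inter> cball x r. g y \<le> g w"
    if "x \<in> S" "0 \<le> r" for x r
    using that assms(1,4)
    by (intro continuous_attains_sup) (auto intro: continuous_on_subset compact_Int_closed)
  obtain x where x: "x \<in> S" using assms(3) by blast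
  obtain w where w: "w \<in> S \<inter> cball x 1" "\<forall>y\<in>S \<inter> cball x 1. g y \<le> g w"
    using attains_on_ball[OF x, of 1] by auto
  have gxw: "g x \<le> g w" using w(2) x by auto
  define R where "R = 1 + 2 * (g w - g x) / c"
  have R: "1 \<le> R" using gxw assms(6) by (simp add: R_def)
  obtain z where z: "z \<in> S \<inter> cball x R" "\<forall>y\<in>S \<inter> cball x R. g y \<le> g z"
    using attains_on_ball[OF x, of R] R by auto
  have "g y \<le> g z" if y: "y \<in> S" for y
  proof (cases "norm (y - x) \<le> R")
    case True
    then show ?thesis using z(2) y by (auto simp: dist_norm norm_minus_commute)
  next
    case False
    have "g y - g x \<le> norm (y - x) * (g w - g x - c / 2 * (norm (y - x) - 1))"
      using w(2) False R
      by (intro strongly_concave_on_decay[OF assms(2,5) x y]) (auto simp: dist_norm norm_minus_commute)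
    moreover have "g w - g x - c / 2 * (norm (y - x) - 1) < 0"
      using False assms(6) by (simp add: R_def field_simps)
    ultimately have "g y - g x < 0"
      using mult_pos_neg[of "norm (y - x)"] False R by fastforce
    moreover have "g x \<le> g z" using z(2) x R by auto
    ultimately show ?thesis by simp
  qed
  then show thesis using z(1) that by blast
qed

lemma dir_deriv_le_of_decrease:
  assumes "dir_deriv u x v L" "0 < \<delta>"
    and "\<And>t. 0 < t \<Longrightarrow> t < \<delta> \<Longrightarrow> u (x + t *\<^sub>R v) \<le> u x - t * c"
  shows "L \<le> - c"
proof -
  have "(u (x + t *\<^sub>R v) - u x) / t \<le> - c" if "0 < t" "t < \<delta>" for t
    using assms(3)[OF that] that by (simp add: divide_le_eq algebra_simps)
  then have "\<forall>\<^sub>F t in at_right 0. (u (x + t *\<^sub>R v) - u x) / t \<le> - c"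
    unfolding eventually_at_right_field using assms(2) by blast
  then show ?thesis
    using assms(1) unfolding dir_deriv_def by (intro tendsto_upperbound) auto
qed

lemma u_merit_descent:
  fixes S :: "'a::euclidean_space set"
  assumes conv: "\<And>i. i < m \<Longrightarrow> convex_on S (F i)" and "0 < m" "0 \<le> l" "x \<in> S" "z \<in> S"
    and growth: "\<And>y. y \<in> S \<Longrightarrow> merit_gap l m F x y \<le> merit_gap l m F x z - l / 2 * (norm (y - z))\<^sup>2"
    and margin: "\<And>j. j < m \<Longrightarrow> d \<le> (F j x + F j z) / 2 - F j (midpoint x z)"
    and t: "0 \<le> t" "t \<le> 1/2"
  shows "u_merit l m F S (x + t *\<^sub>R (z - x)) \<le> u_merit l m F S x - 2 * t * d"
proof -
  define U where "U = merit_gap l m F x z"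
  define D where "D = (norm (z - x))\<^sup>2"
  define xt where "xt = x + t *\<^sub>R (z - x)"
  have "merit_gap l m F x y \<le> U" if "y \<in> S" for y
  proof -
    have "0 \<le> l / 2 * (norm (y - z))\<^sup>2" using assms(3) by simp
    then show ?thesis using growth[OF that] by (simp add: U_def)
  qed
  then have u_x: "u_merit l m F S x = U"
    unfolding u_merit_eq_SUP_merit_gap using assms(5) by (intro cSup_eq_maximum) (auto simp: U_def)
  have "l / 2 * D \<le> U"
    using growth[OF assms(4)] merit_gap_self[OF assms(2), of l F x] norm_minus_commute[of x z]
    by (simp add: U_def D_def)
  then have tUD: "t * (l / 2 * D) \<le> t * U"
    using t by (intro mult_left_mono) auto
  have "merit_gap l m F xt y \<le> U - 2 * t * d" if y: "y \<in> S" for y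
  proof -
    \<comment> \<open>The branch j active in merit_gap at (x, y) bounds merit_gap at (xt, y); the quadratic
      growth around z pays for the change of the distance term.\<close>
    obtain j where j: "j < m" "merit_gap l m F x y = F j x - F j y - l / 2 * (norm (x - y))\<^sup>2"
      using merit_gap_attained[OF assms(2)] by blast
    have "F j xt \<le> F j x + t * (F j z - F j x) - 2 * t * d"
    proof -
      have "2 * t * d \<le> 2 * t * ((F j x + F j z) / 2 - F j (midpoint x z))"
        using margin[OF j(1)] t by (intro mult_left_mono) auto
      then show ?thesis
        using convex_on_midpoint_descent[OF conv[OF j(1)] assms(4,5) t] by (simp add: xt_def)
    qed
    moreover have "t * U \<le> t * (F j x - F j z - l / 2 * D)"
      using merit_gap_le[OF j(1), of l F x z] t
      by (intro mult_left_mono) (auto simp: U_def D_def norm_minus_commute)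
    moreover have "l / 2 * (norm (x - y))\<^sup>2
        \<le> l / 2 * (norm (xt - y))\<^sup>2 + l / 2 * (norm (y - z))\<^sup>2 + t * (l * D)"
      using mult_left_mono[OF power2_norm_diff_le_shifted[of x y t z], of "l / 2"] assms(3)
      by (simp add: xt_def D_def algebra_simps)
    moreover have "merit_gap l m F xt y \<le> F j xt - F j y - l / 2 * (norm (xt - y))\<^sup>2"
      by (rule merit_gap_le[OF j(1)])
    ultimately show ?thesis
      using growth[OF y] j(2) tUD unfolding U_def by (simp add: algebra_simps)
  qed
  then show ?thesis
    unfolding u_x unfolding u_merit_eq_SUP_merit_gap xt_def[symmetric]
    using assms(5) by (intro cSUP_least) auto
qed

lemma merit_maximiser_eq_if_stationary:
  fixes S :: "'a::euclidean_space set"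
  assumes "convex S" "\<And>i. i < m \<Longrightarrow> strictly_convex_on S (F i)" "0 < m" "0 \<le> l" "x \<in> S" "z \<in> S"
    and growth: "\<And>y. y \<in> S \<Longrightarrow> merit_gap l m F x y \<le> merit_gap l m F x z - l / 2 * (norm (y - z))\<^sup>2"
    and stationary: "dir_deriv (u_merit l m F S) x (z - x) L" "0 \<le> L"
  shows "z = x"
proof (rule ccontr)
  assume "z \<noteq> x"
  define d where "d = Min ((\<lambda>j. (F j x + F j z) / 2 - F j (midpoint x z)) ` {..<m})"
  have "0 < d"
    unfolding d_def using assms(3) strictly_convex_on_midpoint_less[OF assms(2) assms(5,6)] \<open>z \<noteq> x\<close>
    by (subst Min_gr_iff) auto
  have margin: "d \<le> (F j x + F j z) / 2 - F j (midpoint x z)" if "j < m" for j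
    unfolding d_def using that by (intro Min_le) auto
  have "L \<le> - (2 * d)"
  proof (rule dir_deriv_le_of_decrease[OF stationary(1), of "1/2"])
    fix t :: real assume "0 < t" "t < 1/2"
    then show "u_merit l m F S (x + t *\<^sub>R (z - x)) \<le> u_merit l m F S x - t * (2 * d)"
      using u_merit_descent[OF strictly_convex_on_imp_convex_on[OF assms(1,2)] assms(3-6) growth margin, of t]
      by simp
  qed simp
  then show False using \<open>0 < d\<close> stationary(2) by simp
qed

lemma pareto_optimal_if_merit_gap_le:
  assumes "convex S" "\<And>i. i < m \<Longrightarrow> strictly_convex_on S (F i)" "0 < m" "x \<in> S"
    and "\<And>y. y \<in> S \<Longrightarrow> merit_gap l m F x y \<le> - l / 2 * (norm (y - x))\<^sup>2"
  shows "pareto_optimal m F S x"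
  unfolding pareto_optimal_def
proof (intro conjI notI assms(4))
  assume "\<exists>z\<in>S. (\<forall>i<m. F i z \<le> F i x) \<and> (\<exists>i<m. F i z \<noteq> F i x)"
  then obtain z where z: "z \<in> S" "\<forall>i<m. F i z \<le> F i x" "z \<noteq> x" by blast
  define w where "w = midpoint x z"
  have "w \<in> S" unfolding w_def using midpoint_in_convex[OF assms(1,4) z(1)] .
  obtain j where j: "j < m" "merit_gap l m F x w = F j x - F j w - l / 2 * (norm (x - w))\<^sup>2"
    using merit_gap_attained[OF assms(3)] by blast
  have "F j w < F j x"
    using strictly_convex_on_midpoint_less[OF assms(2)[OF j(1)] assms(4) z(1)] z(2,3) j(1)
    unfolding w_def by fastforce
  then show False
    using assms(5)[OF \<open>w \<in> S\<close>] j(2) by (simp add: norm_minus_commute)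
qed

theorem theorem3p8:
  fixes S :: "'a::euclidean_space set"
    and F :: "nat \<Rightarrow> 'a \<Rightarrow> real"
    and m :: nat and l :: real and x :: 'a
  assumes "S \<noteq> {}" and "closed S" and "convex S"
    and "m \<ge> 1"
    and "\<And>i. i < m \<Longrightarrow> continuous_on S (F i)"
    and "\<And>i. i < m \<Longrightarrow> strictly_convex_on S (F i)"
    and "l > 0"
    and "x \<in> S"
    and "\<forall>z\<in>S. \<exists>L. dir_deriv (u_merit l m F S) x (z - x) L \<and> L \<ge> 0"
  shows "pareto_optimal m F S x"
proof -
  have m: "0 < m" using assms(4) by simp
  have "strongly_concave_on l S (merit_gap l m F x)"
    using strictly_convex_on_imp_convex_on[OF assms(3,6)] by (rule strongly_concave_on_merit_gap[OF m])
  moreover obtain z where z: "z \<in> S" "\<And>y. y \<in> S \<Longrightarrow> merit_gap l m F x y \<le> merit_gap l m F x z"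
    using strongly_concave_on_attains_max[OF assms(2,3,1) continuous_on_merit_gap[OF m assms(5)]
        \<open>strongly_concave_on l S _\<close> assms(7)] by blast
  ultimately have growth: "merit_gap l m F x y \<le> merit_gap l m F x z - l / 2 * (norm (y - z))\<^sup>2"
    if "y \<in> S" for y
    using strongly_concave_on_quadratic_growth[OF assms(3)] that by blast
  obtain L where "dir_deriv (u_merit l m F S) x (z - x) L" "0 \<le> L"
    using assms(9) z(1) by blast
  then have "z = x"
    using merit_maximiser_eq_if_stationary[OF assms(3,6) m _ assms(8) z(1) growth] assms(7) by simp
  then have "merit_gap l m F x y \<le> - l / 2 * (norm (y - x))\<^sup>2" if "y \<in> S" for y
    using growth[OF that] merit_gap_self[OF m, of l F x] by simp
  then show ?thesis
    using pareto_optimal_if_merit_gap_le[of S m F x l] assms(3,6,8) m by blast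
qed

end
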